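(* Let $\Omega\subset\mathbb{R}^n$ be open, $\omega\in A_\infty$, and $\varphi(x,t)=t^{p(x)}$ where $p:\Omega\to[1,\infty]$ is measurable and $\frac1p$ satisfies the log-Hölder decay condition. Then $\varphi$ satisfies (A2)$_\omega$.
   Context: Convention: $t^\infty:=\infty\cdot\chi_{(1,\infty)}(t)$ and $1/\infty:=0$. $\frac1p$ satisfies the log-Hölder decay condition if there exist $p_\infty\in[1,\infty]$ and $c_2>0$ with $\big|\frac1{p(x)}-\frac1{p_\infty}\big|\le\frac{c_2}{\log(e+|x|)}$ for all $x\in\Omega$. A weight is a nonnegative locally integrable function $\omega$ on $\mathbb{R}^n$, $\omega(E):=\int_E\omega\,dx$; $L^1(\Omega,\omega)$ is the set of measurable $h$ with $\int_\Omega|h|\omega\,dx<\infty$. For $1<q<\infty$, $\omega\in A_q$ means $\sup_B|B|^{-q}\omega(B)\big(\int_B\omega^{-q'/q}dx\big)^{q-1}<\infty$ with $1/q+1/q'=1$, supremum over open balls; $\omega\in A_1$ means $M\omega\le C\omega$ a.e.; $A_\infty:=\bigcup_{q\in[1,\infty)}A_q$. (A2)$_\omega$: for every $s>0$ there exist $\beta_2\in(0,1]$ and $h\in L^1(\Omega,\omega)\cap L^\infty(\Omega)$, $h\ge0$, such that $\varphi(x,\beta_2t)\le\varphi(y,t)+h(x)+h(y)$ for a.e. $x,y\in\Omega$ whenever $\varphi(y,t)\in[0,s]$. *)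

theory Defs
  imports "HOL-Analysis.Analysis"
begin

definition is_weight :: "('a::euclidean_space \<Rightarrow> real) \<Rightarrow> bool" where
  "is_weight w \<longleftrightarrow> (\<forall>x. 0 \<le> w x) \<and> (\<forall>K. compact K \<longrightarrow> set_integrable lebesgue K w)"

definition wmeas :: "('a::euclidean_space \<Rightarrow> real) \<Rightarrow> 'a set \<Rightarrow> ennreal" where
  "wmeas w E = (\<integral>\<^sup>+ y\<in>E. ennreal (w y) \<partial>lebesgue)"

definition epowr :: "ennreal \<Rightarrow> real \<Rightarrow> ennreal" where
  "epowr x a = (if x = \<infinity> then \<infinity> else ennreal (enn2real x powr a))"

text \<open>A_q for 1 < q < infinity: sup over open balls B of
  |B|^{-q} w(B) (int_B w^{-q'/q})^{q-1} is finite; note q'/q = 1/(q-1), and w^{-1/(q-1)} = infinity where w = 0.\<close>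
definition A_q :: "real \<Rightarrow> ('a::euclidean_space \<Rightarrow> real) set" where
  "A_q q = {w. is_weight w \<and>
     (\<exists>C::real. \<forall>c r. 0 < r \<longrightarrow>
        wmeas w (ball c r) *
          epowr (\<integral>\<^sup>+ y\<in>ball c r. (if w y = 0 then \<infinity> else ennreal (w y powr (- 1 / (q - 1)))) \<partial>lebesgue) (q - 1)
        \<le> ennreal C * ennreal (measure lebesgue (ball c r) powr q))}"

definition maximal_fn :: "('a::euclidean_space \<Rightarrow> real) \<Rightarrow> 'a \<Rightarrow> ennreal" where
  "maximal_fn w x = (SUP B\<in>{ball c r | c r. 0 < r \<and> x \<in> ball c r}.
       ennreal (1 / measure lebesgue B) * (\<integral>\<^sup>+ y\<in>B. ennreal \<bar>w y\<bar> \<partial>lebesgue))"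

definition A_1 :: "('a::euclidean_space \<Rightarrow> real) set" where
  "A_1 = {w. is_weight w \<and> (\<exists>C::real. AE x in lebesgue. maximal_fn w x \<le> ennreal C * ennreal (w x))}"

definition A_inf :: "('a::euclidean_space \<Rightarrow> real) set" where
  "A_inf = A_1 \<union> (\<Union>q\<in>{1<..}. A_q q)"

text \<open>1/p with the convention 1/infinity = 0.\<close>
definition recip :: "ereal \<Rightarrow> real" where
  "recip e = real_of_ereal (inverse e)"

definition log_Hoelder_decay :: "'a::euclidean_space set \<Rightarrow> ('a \<Rightarrow> ereal) \<Rightarrow> bool" where
  "log_Hoelder_decay \<Omega> p \<longleftrightarrow> (\<exists>p_inf::ereal. 1 \<le> p_inf \<and> (\<exists>c2>0. \<forall>x\<in>\<Omega>.
      \<bar>recip (p x) - recip p_inf\<bar> \<le> c2 / ln (exp 1 + norm x)))"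

definition var_power :: "('a \<Rightarrow> ereal) \<Rightarrow> 'a \<Rightarrow> real \<Rightarrow> ennreal" where
  "var_power p x t = (if p x = \<infinity> then (if 1 < t then \<infinity> else 0)
                      else ennreal (t powr real_of_ereal (p x)))"

definition A2_weighted :: "'a::euclidean_space set \<Rightarrow> ('a \<Rightarrow> real) \<Rightarrow> ('a \<Rightarrow> real \<Rightarrow> ennreal) \<Rightarrow> bool" where
  "A2_weighted \<Omega> w \<phi> \<longleftrightarrow> (\<forall>s::real. 0 < s \<longrightarrow> (\<exists>\<beta>2 h. 0 < \<beta>2 \<and> \<beta>2 \<le> 1 \<and>
      h \<in> borel_measurable (restrict_space lebesgue \<Omega>) \<and>
      (\<forall>x\<in>\<Omega>. 0 \<le> h x) \<and>
      (\<integral>\<^sup>+ x\<in>\<Omega>. ennreal (\<bar>h x\<bar> * w x) \<partial>lebesgue) < \<infinity> \<and>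
      (\<exists>M::real. AE x in lebesgue. x \<in> \<Omega> \<longrightarrow> \<bar>h x\<bar> \<le> M) \<and>
      (\<exists>N \<in> null_sets lebesgue. \<forall>x\<in>\<Omega> - N. \<forall>y\<in>\<Omega> - N. \<forall>t::real. 0 \<le> t \<longrightarrow>
          \<phi> y t \<le> ennreal s \<longrightarrow>
          \<phi> x (\<beta>2 * t) \<le> \<phi> y t + ennreal (h x) + ennreal (h y))))"

end

theory Submission
  imports Defs
begin

(* An A_inf weight grows polynomially, w(B_R) <= C R^D for R >= 1, so
   h(x) = (e + |x|)^(-m) with m = D + 2 lies in L^1(w) and is bounded by 1.
   For the pointwise inequality take beta = e^(-2cm) / max(1, s): the hypothesis
   phi(y, t) <= s forces t <= max(1, s), so tau = t / max(1, s) <= 1.  The log-Hoelder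
   decay condition gives 1/p(x) <= 1/p(y) + 2c/lambda with
   lambda = min(log(e + |x|), log(e + |y|)), and comparing exponents shows that
   (e^(-2cm) tau)^p(x) is at most either e^(-m lambda) <= h(x) + h(y) or
   tau^p(y) <= t^p(y). *)

(* With a = 1/p(x), b = 1/p(y) and L = -ln tau this compares the exponents of
   (e^(-2cm) tau)^p(x), e^(-m lam) and tau^p(y). *)
lemma log_Hoelder_exponent_cases:
  fixes a b c m lam L :: real
  assumes a: "0 < a" and b: "0 \<le> b" and c: "0 < c" and m: "0 < m" and lam: "1 \<le> lam"
    and ab: "a \<le> b + 2 * c / lam" and L: "0 \<le> L"
  shows "m * lam \<le> (L + 2 * c * m) / a \<or> (0 < b \<and> L / b \<le> (L + 2 * c * m) / a)"
proof (cases "m * lam \<le> (L + 2 * c * m) / a")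
  case False
  hence "L + 2 * c * m < a * m * lam"
    using a by (simp add: field_simps)
  also have "\<dots> \<le> (b + 2 * c / lam) * m * lam"
    using ab m lam by (intro mult_right_mono) auto
  also have "\<dots> = b * m * lam + 2 * c * m"
    using lam by (simp add: field_simps)
  finally have L_lt: "L < b * m * lam" by simp
  hence b_pos: "0 < b"
    using L b m lam by (cases "b = 0") auto
  have "L / lam < b * m"
    using L_lt lam by (simp add: field_simps)
  hence L_le: "2 * c * (L / lam) \<le> 2 * c * (b * m)"
    using c by (intro mult_left_mono) auto
  have "a * L \<le> (b + 2 * c / lam) * L"
    using ab L by (rule mult_right_mono)
  also have "\<dots> = b * L + 2 * c * (L / lam)"
    by (simp add: algebra_simps)
  also have "\<dots> \<le> b * L + 2 * c * (b * m)"
    using L_le by simp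
  finally have "a * L \<le> b * (L + 2 * c * m)"
    by (simp add: algebra_simps)
  hence "L / b \<le> (L + 2 * c * m) / a"
    using a b_pos by (simp add: field_simps)
  thus ?thesis using b_pos by simp
qed simp

lemma perturbed_powr_le_cases:
  fixes \<tau> a b c m lam :: real
  assumes \<tau>: "0 < \<tau>" "\<tau> \<le> 1" and a: "0 < a" and b: "0 \<le> b" and c: "0 < c" and m: "0 < m"
    and lam: "1 \<le> lam" and ab: "a \<le> b + 2 * c / lam"
  shows "(exp (- (2 * c * m)) * \<tau>) powr (1 / a) \<le> exp (- (m * lam)) \<or>
    (0 < b \<and> (exp (- (2 * c * m)) * \<tau>) powr (1 / a) \<le> \<tau> powr (1 / b))"
proof -
  define L where "L = - ln \<tau>"
  have L: "0 \<le> L"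
    using \<tau> by (simp add: L_def)
  have lhs: "(exp (- (2 * c * m)) * \<tau>) powr (1 / a) = exp (- ((L + 2 * c * m) / a))"
    using \<tau> a by (simp add: powr_def ln_mult L_def field_simps)
  have rhs: "\<tau> powr (1 / b) = exp (- (L / b))"
    using \<tau> by (simp add: powr_def L_def)
  show ?thesis
    using log_Hoelder_exponent_cases[OF a b c m lam ab L] unfolding lhs rhs by auto
qed

lemma recip_ereal: "1 \<le> r \<Longrightarrow> recip (ereal r) = 1 / r"
  by (simp add: recip_def inverse_eq_divide)

lemma recip_nonneg: "0 \<le> p \<Longrightarrow> 0 \<le> recip p"
  by (cases p) (auto simp: recip_def)

lemma le_max_of_var_power_le:
  assumes py: "1 \<le> p y" and vy: "var_power p y t \<le> ennreal s"
  shows "t \<le> max 1 s"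
proof (cases "p y")
  case (real Q)
  have Q: "1 \<le> Q" using py real by simp
  show ?thesis
  proof (cases "1 < t")
    case True
    have "t = t powr 1" using True by simp
    also have "\<dots> \<le> t powr Q" using True Q by (intro powr_mono) auto
    also have "\<dots> \<le> s"
      using vy real True by (simp add: var_power_def ennreal_le_iff2)
    finally show ?thesis by simp
  qed simp
qed (use assms in \<open>auto simp: var_power_def top_unique split: if_splits\<close>)

lemma exp_plus_norm_pos: "0 < exp 1 + norm x"
  using add_pos_nonneg[OF exp_gt_zero[of 1] norm_ge_zero[of x]] .

lemma decay_eq_exp_ln: "(exp 1 + norm x) powr (- m) = exp (- (m * ln (exp 1 + norm x)))"
  using exp_plus_norm_pos[of x] by (simp add: powr_def)

lemma one_le_ln_exp_plus_norm: "1 \<le> ln (exp 1 + norm x)"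
  using exp_plus_norm_pos[of x] by (subst ln_ge_iff) auto

lemma continuous_on_decay: "continuous_on S (\<lambda>x::'a::real_normed_vector. (exp 1 + norm x) powr (- m))"
  by (intro continuous_intros) (simp add: exp_plus_norm_pos[THEN less_imp_neq, THEN not_sym])

lemma decay_le_one:
  assumes "0 \<le> m"
  shows "(exp 1 + norm x) powr (- m) \<le> 1"
proof -
  have "(exp 1 + norm x) powr (- m) \<le> 1 powr (- m)"
  proof (rule powr_mono2')
    show "1 \<le> exp 1 + norm x"
      using exp_ge_add_one_self[of 1] norm_ge_zero[of x] by linarith
  qed (use assms in simp_all)
  thus ?thesis by simp
qed

lemma var_power_log_Hoelder_pointwise:
  fixes p :: "'a::real_normed_vector \<Rightarrow> ereal" and c m q s t :: real
  assumes px: "1 \<le> p x" and py: "1 \<le> p y" and c: "0 < c" and m: "0 < m" and t: "0 \<le> t"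
    and hx: "\<bar>recip (p x) - q\<bar> \<le> c / ln (exp 1 + norm x)"
    and hy: "\<bar>recip (p y) - q\<bar> \<le> c / ln (exp 1 + norm y)"
    and vy: "var_power p y t \<le> ennreal s"
  shows "var_power p x (exp (- (2 * c * m)) / max 1 s * t)
    \<le> var_power p y t + ennreal ((exp 1 + norm x) powr (- m)) + ennreal ((exp 1 + norm y) powr (- m))"
    (is "var_power p x ?u \<le> ?vy + ennreal ?hx + ennreal ?hy")
proof (cases "t = 0")
  case True
  thus ?thesis by (simp add: var_power_def)
next
  case False
  define \<tau> where "\<tau> = t / max 1 s"
  have \<tau>: "0 < \<tau>" "\<tau> \<le> 1" "\<tau> \<le> t"
    using t False le_max_of_var_power_le[OF py vy] by (auto simp: \<tau>_def field_simps)
  have u: "?u = exp (- (2 * c * m)) * \<tau>"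
    by (simp add: \<tau>_def)
  have u_le_1: "?u \<le> 1"
    unfolding u using \<tau> c m by (intro mult_le_one) auto
  define lam where "lam = min (ln (exp 1 + norm x)) (ln (exp 1 + norm y))"
  have py0: "0 \<le> p y"
    using py by (cases "p y") auto
  have lam: "1 \<le> lam"
    by (simp add: lam_def one_le_ln_exp_plus_norm)
  have "c / ln (exp 1 + norm x) \<le> c / lam" "c / ln (exp 1 + norm y) \<le> c / lam"
    using lam c by (auto simp: lam_def intro!: divide_left_mono)
  hence ab: "recip (p x) \<le> recip (p y) + 2 * c / lam"
    using hx hy by linarith
  have "exp (- (m * lam)) = ?hx \<or> exp (- (m * lam)) = ?hy"
    by (simp add: lam_def min_def decay_eq_exp_ln)
  hence decay: "exp (- (m * lam)) \<le> ?hx + ?hy"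
    by (elim disjE) (simp_all add: add_increasing add_increasing2)
  show ?thesis
  proof (cases "p x")
    case (real P)
    have a: "recip (p x) = 1 / P" "0 < 1 / P"
      using px real by (auto simp: recip_ereal)
    have "?u powr P \<le> exp (- (m * lam)) \<or> (0 < recip (p y) \<and> ?u powr P \<le> \<tau> powr (1 / recip (p y)))"
      using perturbed_powr_le_cases[OF \<tau>(1,2) a(2) recip_nonneg[OF py0] c m lam] ab
      unfolding u a by simp
    hence "?u powr P \<le> ?hx + ?hy \<or> (\<exists>Q. p y = ereal Q \<and> ?u powr P \<le> t powr Q)"
    proof (elim disjE conjE)
      assume "0 < recip (p y)" and le: "?u powr P \<le> \<tau> powr (1 / recip (p y))"
      then obtain Q where Q: "p y = ereal Q" "1 \<le> Q"
        using py by (cases "p y") (auto simp: recip_def)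
      have "?u powr P \<le> \<tau> powr Q"
        using le Q by (simp add: recip_ereal)
      also have "\<dots> \<le> t powr Q"
        using \<tau> Q by (intro powr_mono2) auto
      finally show ?thesis
        using Q by blast
    qed (use decay in simp)
    hence "ennreal (?u powr P) \<le> ennreal ?hx + ennreal ?hy \<or> ennreal (?u powr P) \<le> ?vy"
      by (elim disjE exE) (simp_all add: var_power_def ennreal_leI flip: ennreal_plus)
    hence "ennreal (?u powr P) \<le> ?vy + ennreal ?hx + ennreal ?hy"
      by (elim disjE) (simp_all add: add_increasing add_increasing2 add.assoc)
    thus ?thesis
      using real by (simp add: var_power_def)
  next
    case PInf
    have "\<not> 1 < ?u"
      using u_le_1 by linarith
    hence "var_power p x ?u = 0"
      unfolding var_power_def if_P[OF PInf] by simp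
    thus ?thesis by simp
  next
    case MInf
    thus ?thesis
      using px by simp
  qed
qed

definition polynomial_growth :: "('a::euclidean_space \<Rightarrow> real) \<Rightarrow> real \<Rightarrow> bool" where
  "polynomial_growth w D \<longleftrightarrow> (\<exists>C\<ge>0. \<forall>R\<ge>1. wmeas w (ball 0 R) \<le> ennreal (C * R powr D))"

lemma measure_lebesgue_ball:
  fixes c :: "'a::euclidean_space"
  assumes "0 \<le> r"
  shows "measure lebesgue (ball c r) = r ^ DIM('a) * measure lebesgue (ball (0::'a) 1)"
  using content_ball_conv_unit_ball[OF assms, of c] by (simp add: measure_completion)

lemma measure_lebesgue_unit_ball_pos: "0 < measure lebesgue (ball (0::'a::euclidean_space) 1)"
  using content_ball_pos[of 1 "0::'a"] by (simp add: measure_completion)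

lemma emeasure_lebesgue_ball: "emeasure lebesgue (ball c r) = ennreal (measure lebesgue (ball c r))"
  by (simp add: emeasure_eq_measure2 emeasure_lborel_ball_finite)

lemma ennreal_le_divide_of_mult_le:
  assumes "0 < k" "X * ennreal k \<le> ennreal Y"
  shows "X \<le> ennreal (Y / k)"
proof -
  have "X = X * ennreal k * ennreal (1 / k)"
    using assms(1) by (simp add: mult.assoc flip: ennreal_mult)
  also have "\<dots> \<le> ennreal Y * ennreal (1 / k)"
    using assms(2) by (rule mult_right_mono) simp
  also have "\<dots> = ennreal (Y / k)"
    using assms(1) by (cases "0 \<le> Y") (auto simp: ennreal_neg divide_nonpos_pos simp flip: ennreal_mult)
  finally show ?thesis .
qed

lemma polynomial_growthI_ball_measure:
  fixes w :: "'a::euclidean_space \<Rightarrow> real" and e K :: real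
  assumes e: "0 \<le> e"
    and bound: "\<And>R. 1 \<le> R \<Longrightarrow> wmeas w (ball 0 R) \<le> ennreal (K * measure lebesgue (ball (0::'a) R) powr e)"
  shows "polynomial_growth w (real DIM('a) * e)"
  unfolding polynomial_growth_def
proof (intro exI conjI allI impI)
  define V where "V = measure lebesgue (ball (0::'a) 1)"
  have V: "0 < V"
    by (simp add: V_def measure_lebesgue_unit_ball_pos)
  show "0 \<le> max 0 K * V powr e" by simp
  fix R :: real
  assume R: "1 \<le> R"
  have "wmeas w (ball 0 R) \<le> ennreal (K * measure lebesgue (ball (0::'a) R) powr e)"
    using R by (rule bound)
  also have "\<dots> \<le> ennreal (max 0 K * measure lebesgue (ball (0::'a) R) powr e)"
    by (intro ennreal_leI mult_right_mono) auto
  also have "measure lebesgue (ball (0::'a) R) = R powr real DIM('a) * V"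
    using R measure_lebesgue_ball[of R "0::'a"] by (simp add: V_def powr_realpow)
  also have "max 0 K * (R powr real DIM('a) * V) powr e = max 0 K * V powr e * R powr (real DIM('a) * e)"
    using R V by (simp add: powr_mult powr_powr)
  finally show "wmeas w (ball 0 R) \<le> ennreal (max 0 K * V powr e * R powr (real DIM('a) * e))" .
qed

lemma AE_imp_ex_in_set:
  assumes "AE x in M. P x" "A \<in> sets M" "emeasure M A \<noteq> 0"
  shows "\<exists>x\<in>A. P x"
proof (rule ccontr)
  assume "\<not> (\<exists>x\<in>A. P x)"
  moreover obtain N where "{x \<in> space M. \<not> P x} \<subseteq> N" "N \<in> sets M" "emeasure M N = 0"
    using assms(1) by (auto elim: AE_E)
  ultimately have "A \<subseteq> N"
    using sets.sets_into_space[OF assms(2)] by blast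
  hence "emeasure M A = 0"
    using \<open>N \<in> sets M\<close> \<open>emeasure M N = 0\<close> by (metis emeasure_mono le_zero_eq)
  thus False using assms(3) by contradiction
qed

lemma A_1_polynomial_growth:
  fixes w :: "'a::euclidean_space \<Rightarrow> real"
  assumes "w \<in> A_1"
  shows "polynomial_growth w (real DIM('a))"
proof -
  obtain C where wt: "is_weight w"
    and ae: "AE x in lebesgue. maximal_fn w x \<le> ennreal C * ennreal (w x)"
    using assms by (auto simp: A_1_def)
  \<comment> \<open>The A_1 inequality at one point of the unit ball bounds the averages over all balls B_R, R \<ge> 1.\<close>
  obtain x0 where x0: "x0 \<in> ball 0 1" "maximal_fn w x0 \<le> ennreal C * ennreal (w x0)"
    using AE_imp_ex_in_set[OF ae, of "ball 0 1"] measure_lebesgue_unit_ball_pos[where 'a='a]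
    by (auto simp: emeasure_lebesgue_ball)
  have "wmeas w (ball 0 R) \<le> ennreal (C * w x0 * measure lebesgue (ball (0::'a) R) powr 1)"
    if R: "1 \<le> R" for R
  proof -
    let ?M = "measure lebesgue (ball (0::'a) R)"
    have M: "0 < ?M"
      using R measure_lebesgue_ball[of R "0::'a"] measure_lebesgue_unit_ball_pos[where 'a='a] by simp
    have "ennreal (1 / ?M) * wmeas w (ball 0 R) \<le> maximal_fn w x0"
      unfolding maximal_fn_def wmeas_def
    proof (rule SUP_upper2[where i="ball 0 R"])
      show "ball 0 R \<in> {ball c r |c r. 0 < r \<and> x0 \<in> ball c r}"
        using x0 R by force
      show "ennreal (1 / ?M) * (\<integral>\<^sup>+ y\<in>ball 0 R. ennreal (w y) \<partial>lebesgue)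
          \<le> ennreal (1 / ?M) * (\<integral>\<^sup>+ y\<in>ball 0 R. ennreal \<bar>w y\<bar> \<partial>lebesgue)"
        using wt by (simp add: is_weight_def)
    qed
    also have "\<dots> \<le> ennreal (C * w x0)"
      using x0(2) wt by (cases "0 \<le> C") (auto simp: is_weight_def ennreal_neg simp flip: ennreal_mult)
    finally have "wmeas w (ball 0 R) * ennreal (1 / ?M) \<le> ennreal (C * w x0)"
      by (simp add: mult.commute)
    hence "wmeas w (ball 0 R) \<le> ennreal (C * w x0 / (1 / ?M))"
      using M by (intro ennreal_le_divide_of_mult_le) auto
    thus ?thesis by simp
  qed
  from polynomial_growthI_ball_measure[of 1 w, OF _ this] show ?thesis
    by simp
qed

lemma set_nn_integral_pos:
  assumes f: "(\<lambda>x. f x * indicator A x) \<in> borel_measurable M"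
    and A: "A \<in> sets M" "emeasure M A \<noteq> 0" and pos: "\<And>x. x \<in> A \<Longrightarrow> 0 < f x"
  shows "0 < set_nn_integral M A f"
proof -
  have "{x \<in> space M. f x * indicator A x \<noteq> 0} = A"
    using sets.sets_into_space[OF A(1)] by (auto simp: indicator_def dest: pos)
  thus ?thesis
    using nn_integral_0_iff[OF f] A(2) by (simp add: zero_less_iff_neq_zero)
qed

lemma weight_indicator_measurable:
  assumes "is_weight w" "compact K"
  shows "(\<lambda>x. indicator K x * w x) \<in> borel_measurable lebesgue"
proof -
  have "set_integrable lebesgue K w"
    using assms by (auto simp: is_weight_def)
  thus ?thesis
    unfolding set_integrable_def by (auto dest: borel_measurable_integrable)
qed

lemma ennreal_powr_le_epowr:
  assumes "0 \<le> x" "0 \<le> a" "ennreal x \<le> y"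
  shows "ennreal (x powr a) \<le> epowr y a"
proof (cases y)
  case (real r)
  thus ?thesis
    using assms by (auto simp: epowr_def intro!: powr_mono2)
qed (simp add: epowr_def)

lemma A_q_polynomial_growth:
  fixes w :: "'a::euclidean_space \<Rightarrow> real"
  assumes q: "1 < q" and "w \<in> A_q q"
  shows "polynomial_growth w (real DIM('a) * q)"
proof -
  define \<sigma> where "\<sigma> = (\<lambda>y. if w y = 0 then \<infinity> else ennreal (w y powr (- 1 / (q - 1))))"
  obtain C where wt: "is_weight w" and A_q_bound: "\<And>c r. 0 < r \<Longrightarrow>
      wmeas w (ball c r) * epowr (\<integral>\<^sup>+ y\<in>ball c r. \<sigma> y \<partial>lebesgue) (q - 1)
        \<le> ennreal C * ennreal (measure lebesgue (ball c r) powr q)"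
    using assms(2) unfolding A_q_def \<sigma>_def by blast
  define w1 where "w1 = (\<lambda>y. indicator (cball (0::'a) 1) y * w y)"
  have w1_meas[measurable]: "w1 \<in> borel_measurable lebesgue"
    unfolding w1_def using wt by (rule weight_indicator_measurable) simp
  have \<sigma>_eq: "(\<lambda>y. \<sigma> y * indicator (ball 0 1) y)
      = (\<lambda>y. (if w1 y = 0 then \<infinity> else ennreal (w1 y powr (- 1 / (q - 1)))) * indicator (ball 0 1) y)"
    by (auto simp: fun_eq_iff \<sigma>_def w1_def indicator_def)
  have [measurable]: "ball (0::'a) 1 \<in> sets lebesgue"
    by simp
  have \<sigma>_meas: "(\<lambda>y. \<sigma> y * indicator (ball 0 1) y) \<in> borel_measurable lebesgue"
    unfolding \<sigma>_eq by measurable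
  \<comment> \<open>\<sigma> > 0 everywhere, so its integral over the unit ball bounds those over larger balls from below.\<close>
  have "0 < \<sigma> y" for y
    using wt by (auto simp: \<sigma>_def is_weight_def order_le_less)
  hence "0 < (\<integral>\<^sup>+ y\<in>ball 0 1. \<sigma> y \<partial>lebesgue)"
    using measure_lebesgue_unit_ball_pos[where 'a='a]
    by (intro set_nn_integral_pos[OF \<sigma>_meas]) (auto simp: emeasure_lebesgue_ball)
  then obtain k where k: "0 < k" "ennreal k \<le> (\<integral>\<^sup>+ y\<in>ball 0 1. \<sigma> y \<partial>lebesgue)"
    by (intro that[of "enn2real (min 1 (\<integral>\<^sup>+ y\<in>ball 0 1. \<sigma> y \<partial>lebesgue))"])
      (simp_all add: enn2real_positive_iff ennreal_enn2real_if min_less_iff_disj)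
  have "wmeas w (ball 0 R) \<le> ennreal (max 0 C / k powr (q - 1) * measure lebesgue (ball (0::'a) R) powr q)"
    if R: "1 \<le> R" for R
  proof -
    let ?I = "\<integral>\<^sup>+ y\<in>ball 0 R. \<sigma> y \<partial>lebesgue"
    have "(\<integral>\<^sup>+ y\<in>ball 0 1. \<sigma> y \<partial>lebesgue) \<le> ?I"
      using R by (intro nn_integral_mono) (simp split: split_indicator)
    with k(2) have "ennreal k \<le> ?I"
      by (rule order_trans)
    hence "wmeas w (ball 0 R) * ennreal (k powr (q - 1)) \<le> wmeas w (ball 0 R) * epowr ?I (q - 1)"
      using k q by (intro mult_left_mono ennreal_powr_le_epowr) auto
    also have "\<dots> \<le> ennreal C * ennreal (measure lebesgue (ball (0::'a) R) powr q)"
      using R by (intro A_q_bound) simp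
    also have "\<dots> \<le> ennreal (max 0 C * measure lebesgue (ball (0::'a) R) powr q)"
      by (cases "0 \<le> C") (auto simp: ennreal_neg simp flip: ennreal_mult)
    finally have "wmeas w (ball 0 R) \<le> ennreal (max 0 C * measure lebesgue (ball (0::'a) R) powr q / k powr (q - 1))"
      using k by (intro ennreal_le_divide_of_mult_le) auto
    thus ?thesis
      unfolding times_divide_eq_left .
  qed
  from polynomial_growthI_ball_measure[of q w, OF _ this] q show ?thesis
    by simp
qed

lemma A_inf_is_weight: "w \<in> A_inf \<Longrightarrow> is_weight w"
  by (auto simp: A_inf_def A_1_def A_q_def)

lemma A_inf_polynomial_growth:
  fixes w :: "'a::euclidean_space \<Rightarrow> real"
  assumes "w \<in> A_inf"
  obtains D where "0 \<le> D" "polynomial_growth w D"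
  using assms unfolding A_inf_def
proof (elim UnE UN_E)
  assume "w \<in> A_1"
  from A_1_polynomial_growth[OF this] show thesis
    by (rule that[rotated]) simp
next
  fix q :: real
  assume "q \<in> {1<..}" "w \<in> A_q q"
  from A_q_polynomial_growth[OF _ this(2)] this(1) show thesis
    by (intro that[rotated]) auto
qed

lemma polynomial_growth_decay_integrable:
  fixes w :: "'a::euclidean_space \<Rightarrow> real" and D m :: real
  assumes wt: "is_weight w" and growth: "polynomial_growth w D" and D: "0 \<le> D" and m: "D + 1 < m"
  shows "(\<integral>\<^sup>+ x. ennreal ((exp 1 + norm x) powr (- m) * w x) \<partial>lebesgue) < \<infinity>"
proof -
  obtain C where C: "0 \<le> C" and bound: "\<And>R. 1 \<le> R \<Longrightarrow> wmeas w (ball 0 R) \<le> ennreal (C * R powr D)"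
    using growth by (auto simp: polynomial_growth_def)
  define f where
    "f k x = ennreal (real (Suc k) powr (- m)) * (ennreal (w x) * indicator (ball 0 (real (Suc k))) x)"
    for k :: nat and x :: 'a
  have w_ball_meas: "(\<lambda>x. ennreal (w x) * indicator (ball (0::'a) R) x) \<in> borel_measurable lebesgue" for R
  proof -
    have [measurable]: "(\<lambda>x. indicator (cball (0::'a) R) x * w x) \<in> borel_measurable lebesgue"
      using wt by (rule weight_indicator_measurable) simp
    have [measurable]: "ball (0::'a) R \<in> sets lebesgue"
      by simp
    have "(\<lambda>x. ennreal (w x) * indicator (ball (0::'a) R) x)
        = (\<lambda>x. ennreal (indicator (cball 0 R) x * w x) * indicator (ball 0 R) x)"
      by (auto simp: fun_eq_iff indicator_def)
    thus ?thesis by simp measurable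
  qed
  have f_meas: "f k \<in> borel_measurable lebesgue" for k
    unfolding f_def by (intro borel_measurable_times_ennreal borel_measurable_const w_ball_meas)
  have "ennreal ((exp 1 + norm x) powr (- m) * w x) \<le> (\<Sum>k. f k x)" for x :: 'a
  proof -
    define k where "k = nat \<lfloor>norm x\<rfloor>"
    have k: "real k \<le> norm x" "norm x < real (Suc k)"
      unfolding k_def by (auto simp: of_nat_nat) linarith
    have "(exp 1 + norm x) powr (- m) \<le> real (Suc k) powr (- m)"
      using k(1) exp_ge_add_one_self[of 1] D m by (intro powr_mono2') auto
    hence "ennreal ((exp 1 + norm x) powr (- m) * w x) \<le> f k x"
      using k wt by (simp add: f_def is_weight_def mult_right_mono flip: ennreal_mult)
    also have "\<dots> \<le> (\<Sum>k. f k x)"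
      using sum_le_suminf[of "\<lambda>k. f k x" "{k}"] by simp
    finally show ?thesis .
  qed
  hence "(\<integral>\<^sup>+ x. ennreal ((exp 1 + norm x) powr (- m) * w x) \<partial>lebesgue)
      \<le> (\<Sum>k. \<integral>\<^sup>+ x. f k x \<partial>lebesgue)"
    by (subst nn_integral_suminf[symmetric]) (auto simp: f_meas intro!: nn_integral_mono)
  also have "\<dots> \<le> (\<Sum>k. ennreal (C * real (Suc k) powr (D - m)))"
  proof (intro suminf_le allI)
    fix k
    have "(\<integral>\<^sup>+ x. f k x \<partial>lebesgue)
        = ennreal (real (Suc k) powr (- m)) * wmeas w (ball 0 (real (Suc k)))"
      unfolding f_def wmeas_def by (rule nn_integral_cmult[OF w_ball_meas])
    also have "\<dots> \<le> ennreal (real (Suc k) powr (- m)) * ennreal (C * real (Suc k) powr D)"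
      by (intro mult_left_mono bound) auto
    also have "\<dots> = ennreal (C * real (Suc k) powr (D - m))"
      using C by (simp add: powr_diff powr_minus divide_inverse mult_ac flip: ennreal_mult)
    finally show "(\<integral>\<^sup>+ x. f k x \<partial>lebesgue) \<le> ennreal (C * real (Suc k) powr (D - m))" .
  qed auto
  also have "\<dots> = ennreal (\<Sum>k. C * real (Suc k) powr (D - m))"
  proof (rule suminf_ennreal2)
    have "summable (\<lambda>k. real k powr (D - m))"
      using m by (simp add: summable_real_powr_iff)
    thus "summable (\<lambda>k. C * real (Suc k) powr (D - m))"
      by (intro summable_mult) (subst summable_Suc_iff)
  qed (use C in simp)
  also have "\<dots> < \<infinity>"
    by simp
  finally show ?thesis .
qed

lemma A_inf_decay_integrable:
  fixes w :: "'a::euclidean_space \<Rightarrow> real"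
  assumes "w \<in> A_inf"
  obtains m where "0 < m" "(\<integral>\<^sup>+ x. ennreal ((exp 1 + norm x) powr (- m) * w x) \<partial>lebesgue) < \<infinity>"
proof -
  obtain D where D: "0 \<le> D" "polynomial_growth w D"
    using assms by (rule A_inf_polynomial_growth)
  show thesis
    using D polynomial_growth_decay_integrable[OF A_inf_is_weight[OF assms] D(2,1), of "D + 2"]
    by (intro that[of "D + 2"]) auto
qed

lemma A2_weightedI:
  fixes h :: "'a::euclidean_space \<Rightarrow> real" and \<beta> :: "real \<Rightarrow> real"
  assumes h_meas: "h \<in> borel_measurable (restrict_space lebesgue \<Omega>)"
    and h_nonneg: "\<And>x. x \<in> \<Omega> \<Longrightarrow> 0 \<le> h x" and h_bounded: "\<And>x. x \<in> \<Omega> \<Longrightarrow> h x \<le> M"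
    and h_integrable: "(\<integral>\<^sup>+ x\<in>\<Omega>. ennreal (h x * w x) \<partial>lebesgue) < \<infinity>"
    and \<beta>: "\<And>s. 0 < s \<Longrightarrow> 0 < \<beta> s \<and> \<beta> s \<le> 1"
    and pointwise: "\<And>s x y t. 0 < s \<Longrightarrow> x \<in> \<Omega> \<Longrightarrow> y \<in> \<Omega> \<Longrightarrow> 0 \<le> t \<Longrightarrow>
      \<phi> y t \<le> ennreal s \<Longrightarrow> \<phi> x (\<beta> s * t) \<le> \<phi> y t + ennreal (h x) + ennreal (h y)"
  shows "A2_weighted \<Omega> w \<phi>"
  unfolding A2_weighted_def
proof (intro allI impI)
  fix s :: real
  assume s: "0 < s"
  have "(\<integral>\<^sup>+ x\<in>\<Omega>. ennreal (\<bar>h x\<bar> * w x) \<partial>lebesgue)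
      = (\<integral>\<^sup>+ x\<in>\<Omega>. ennreal (h x * w x) \<partial>lebesgue)"
    using h_nonneg by (intro nn_integral_cong) (simp split: split_indicator)
  thus "\<exists>\<beta>2 h. 0 < \<beta>2 \<and> \<beta>2 \<le> 1 \<and> h \<in> borel_measurable (restrict_space lebesgue \<Omega>) \<and>
      (\<forall>x\<in>\<Omega>. 0 \<le> h x) \<and> (\<integral>\<^sup>+ x\<in>\<Omega>. ennreal (\<bar>h x\<bar> * w x) \<partial>lebesgue) < \<infinity> \<and>
      (\<exists>M. AE x in lebesgue. x \<in> \<Omega> \<longrightarrow> \<bar>h x\<bar> \<le> M) \<and>
      (\<exists>N \<in> null_sets lebesgue. \<forall>x\<in>\<Omega> - N. \<forall>y\<in>\<Omega> - N. \<forall>t::real. 0 \<le> t \<longrightarrow>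
          \<phi> y t \<le> ennreal s \<longrightarrow> \<phi> x (\<beta>2 * t) \<le> \<phi> y t + ennreal (h x) + ennreal (h y))"
    using \<beta>[OF s] h_meas h_nonneg h_bounded h_integrable pointwise[OF s]
    by (intro exI[of _ "\<beta> s"] exI[of _ h] conjI bexI[of _ "{}"] exI[of _ M]) auto
qed

theorem lemma5p7:
  fixes \<Omega> :: "'a::euclidean_space set" and w :: "'a \<Rightarrow> real" and p :: "'a \<Rightarrow> ereal"
  assumes "open \<Omega>"
    and "w \<in> A_inf"
    and "p \<in> borel_measurable (restrict_space lebesgue \<Omega>)"
    and "\<forall>x\<in>\<Omega>. 1 \<le> p x"
    and "log_Hoelder_decay \<Omega> p"
  shows "A2_weighted \<Omega> w (var_power p)"
proof -
  obtain p_inf c where c: "0 < c"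
    and decay: "\<forall>x\<in>\<Omega>. \<bar>recip (p x) - recip p_inf\<bar> \<le> c / ln (exp 1 + norm x)"
    using assms(5) by (auto simp: log_Hoelder_decay_def)
  obtain m where m: "0 < m"
    and integrable: "(\<integral>\<^sup>+ x. ennreal ((exp 1 + norm x) powr (- m) * w x) \<partial>lebesgue) < \<infinity>"
    using assms(2) by (rule A_inf_decay_integrable)
  show ?thesis
  proof (rule A2_weightedI[where h = "\<lambda>x. (exp 1 + norm x) powr (- m)" and M = 1
        and \<beta> = "\<lambda>s. exp (- (2 * c * m)) / max 1 s"])
    show "(\<lambda>x. (exp 1 + norm x) powr (- m)) \<in> borel_measurable (restrict_space lebesgue \<Omega>)"
      using assms(1) by (intro continuous_imp_measurable_on_sets_lebesgue continuous_on_decay) auto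
    show "(\<integral>\<^sup>+ x\<in>\<Omega>. ennreal ((exp 1 + norm x) powr (- m) * w x) \<partial>lebesgue) < \<infinity>"
      using integrable by (rule le_less_trans[rotated]) (intro nn_integral_mono, simp split: split_indicator)
    show "0 < exp (- (2 * c * m)) / max 1 s \<and> exp (- (2 * c * m)) / max 1 s \<le> 1" for s
      using c m by (auto simp: le_max_iff_disj)
    show "var_power p x (exp (- (2 * c * m)) / max 1 s * t)
        \<le> var_power p y t + ennreal ((exp 1 + norm x) powr (- m)) + ennreal ((exp 1 + norm y) powr (- m))"
      if "x \<in> \<Omega>" "y \<in> \<Omega>" "0 \<le> t" "var_power p y t \<le> ennreal s" for s x y t
      using that assms(4) decay by (intro var_power_log_Hoelder_pointwise c m) auto
  qed (simp_all add: decay_le_one less_imp_le[OF m])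
qed

end
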